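(* There exists a binary $[40,8]$ linear code $N$ that is doubly even, contains the all-ones vector, and whose dual has minimum weight at least $4$, such that no Type~II $\mathbb{Z}_4$-code $C$ of length $40$ with $C^{(1)}=N$ is extremal.
   Context: A $\mathbb{Z}_4$-code of length $n$ is a $\mathbb{Z}_4$-submodule of $\mathbb{Z}_4^n$; it is self-dual if it equals its dual with respect to $x\cdot y=\sum x_iy_i \pmod 4$. The Euclidean weight of $x$ is $n_1(x)+4n_2(x)+n_3(x)$, $n_\alpha(x)$ being the number of coordinates equal to $\alpha$. A Type~II $\mathbb{Z}_4$-code is a self-dual code all of whose codewords have Euclidean weight divisible by $8$; it is extremal if its minimum Euclidean weight equals $8\lfloor n/24\rfloor+8$ (so $16$ for $n=40$). The residue code is $C^{(1)}=\{c\bmod 2: c\in C\}$. A binary code is doubly even if all codeword weights are divisible by $4$. *)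

theory Defs
  imports "HOL-Analysis.Finite_Cartesian_Product" "HOL-Library.Z2" "HOL-Library.Numeral_Type"
begin

definition hweight :: "'a::zero ^ 'n \<Rightarrow> nat" where
  "hweight x = card {i. x $ i \<noteq> 0}"

definition bin_linear_code :: "(bit ^ 'n) set \<Rightarrow> bool" where
  "bin_linear_code N \<longleftrightarrow> 0 \<in> N \<and> (\<forall>x\<in>N. \<forall>y\<in>N. x + y \<in> N)
     \<and> (\<forall>a::bit. \<forall>x\<in>N. (\<chi> i. a * x $ i) \<in> N)"

definition bin_code_nk :: "(bit ^ 'n) set \<Rightarrow> nat \<Rightarrow> bool" where
  "bin_code_nk N k \<longleftrightarrow> bin_linear_code N \<and> card N = 2 ^ k"

definition bin_dual :: "(bit ^ 'n) set \<Rightarrow> (bit ^ 'n) set" where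
  "bin_dual N = {y. \<forall>x\<in>N. (\<Sum>i\<in>UNIV. x $ i * y $ i) = 0}"

definition doubly_even :: "(bit ^ 'n) set \<Rightarrow> bool" where
  "doubly_even N \<longleftrightarrow> (\<forall>x\<in>N. 4 dvd hweight x)"

definition min_weight_ge :: "(bit ^ 'n) set \<Rightarrow> nat \<Rightarrow> bool" where
  "min_weight_ge N d \<longleftrightarrow> (\<forall>x\<in>N. x \<noteq> 0 \<longrightarrow> d \<le> hweight x)"

definition z4_code :: "(4 ^ 'n) set \<Rightarrow> bool" where
  "z4_code C \<longleftrightarrow> 0 \<in> C \<and> (\<forall>x\<in>C. \<forall>y\<in>C. x + y \<in> C)
     \<and> (\<forall>a::4. \<forall>x\<in>C. (\<chi> i. a * x $ i) \<in> C)"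

definition z4_dual :: "(4 ^ 'n) set \<Rightarrow> (4 ^ 'n) set" where
  "z4_dual C = {y. \<forall>x\<in>C. (\<Sum>i\<in>UNIV. x $ i * y $ i) = 0}"

definition self_dual :: "(4 ^ 'n) set \<Rightarrow> bool" where
  "self_dual C \<longleftrightarrow> z4_code C \<and> z4_dual C = C"

definition eucl_weight :: "4 ^ 'n \<Rightarrow> nat" where
  "eucl_weight x = card {i. x $ i = 1} + 4 * card {i. x $ i = 2} + card {i. x $ i = 3}"

definition type_II :: "(4 ^ 'n) set \<Rightarrow> bool" where
  "type_II C \<longleftrightarrow> self_dual C \<and> (\<forall>x\<in>C. 8 dvd eucl_weight x)"

definition min_eucl_weight :: "(4 ^ 'n) set \<Rightarrow> nat" where
  "min_eucl_weight C = Min {eucl_weight x | x. x \<in> C \<and> x \<noteq> 0}"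

definition extremal_type_II :: "(4 ^ 'n) set \<Rightarrow> bool" where
  "extremal_type_II C \<longleftrightarrow> type_II C \<and> min_eucl_weight C = 8 * (CARD('n) div 24) + 8"

definition red2 :: "4 \<Rightarrow> bit" where
  "red2 a = (if a = 0 \<or> a = 2 then 0 else 1)"

definition residue :: "(4 ^ 'n) set \<Rightarrow> (bit ^ 'n) set" where
  "residue C = (\<lambda>c. \<chi> i. red2 (c $ i)) ` C"

end

theory Submission
  imports Defs "HOL-Library.Cardinality"
begin

(* Let C be a self-dual Z4-code with residue code N.
   Because C is self-dual, 2u lies in C for every u in the binary dual of N.  Hence, if
   v is a codeword of N supported inside a coordinate set T, and the dual of N contains,
   for every coordinate j outside T, a vector whose restriction to the complement of T is
   the unit vector at j, then a lift of v can be cleared outside T by adding such vectors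
   2u: C contains a codeword with odd entries exactly on the support of v, entries 0 or 2
   on the rest of T and 0 elsewhere, so of Euclidean weight at most wt(v) + 4 (|T| - wt(v)).

   N contains a word of weight 8 supported on a
   set T of 9 coordinates, and its dual is systematic on the other 31 coordinates, so
   every Type II code with residue N has a nonzero word of Euclidean weight at most 12,
   below the extremal value 16. *)

(* Coordinates of type 'a bit0 are identified with the natural numbers below its
   cardinality, so that facts about explicit lists of entries can be transferred. *)

definition idx :: "'a::finite bit0 \<Rightarrow> nat" where
  "idx i = nat (Rep_bit0 i)"

definition of_idx :: "nat \<Rightarrow> 'a::finite bit0" where
  "of_idx n = Abs_bit0 (int n)"

lemma idx_lt: "idx (i::'a::finite bit0) < CARD('a bit0)"
  using type_definition.Rep[OF type_definition_bit0, of i] by (auto simp: idx_def)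

lemma idx_lt2 [simp]: "idx (i::'a::finite bit0) < 2 * CARD('a)"
  using idx_lt[of i] by simp

lemma of_idx_idx [simp]: "of_idx (idx i) = (i::'a::finite bit0)"
  using type_definition.Rep[OF type_definition_bit0, of i]
  by (simp add: of_idx_def idx_def Rep_bit0_inverse)

lemma idx_of_idx [simp]: "n < CARD('a::finite bit0) \<Longrightarrow> idx (of_idx n :: 'a bit0) = n"
  by (simp add: of_idx_def idx_def Abs_bit0_inverse)

lemma idx_inj: "inj idx"
  by (metis of_idx_idx injI)

lemma idx_eq_iff [simp]: "idx i = idx j \<longleftrightarrow> i = j"
  using idx_inj by (auto dest: injD)

lemma of_idx_eq_of_nat: "n < CARD('a::finite bit0) \<Longrightarrow> (of_idx n :: 'a bit0) = of_nat n"
  by (simp add: of_idx_def bit0.of_nat_eq)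

lemma bij_of_idx: "bij_betw (of_idx :: nat \<Rightarrow> 'a::finite bit0) {..<CARD('a bit0)} UNIV"
  by (rule bij_betw_byWitness[where f'=idx]) (auto simp: image_def intro: exI[of _ "idx x" for x])

lemma all_bit0: "(\<forall>i::'a::finite bit0. P i) \<longleftrightarrow> (\<forall>n<CARD('a bit0). P (of_idx n))"
  by (metis of_idx_idx idx_lt)

lemma sum_bit0: "sum f (UNIV::'a::finite bit0 set) = (\<Sum>n<CARD('a bit0). f (of_idx n))"
  by (rule sum.reindex_bij_betw[OF bij_of_idx, symmetric])

(* Sums over an initial segment become sums over a list, which evaluation can compute. *)
lemma sum_lessThan_list: "(\<Sum>n<N. f n) = (\<Sum>n\<leftarrow>[0..<N]. f n)"
  by (simp add: sum_set_upt_conv_sum_list_nat[symmetric] atLeast_upt lessThan_atLeast0)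

lemma card_filter_upt: "card {n. n < N \<and> P n} = length (filter P [0..<N])"
proof -
  have "set (filter P [0..<N]) = {n. n < N \<and> P n}"
    by auto
  then show ?thesis
    by (metis distinct_card distinct_filter distinct_upt)
qed

lemma card_bit0_pred:
  "card {i::'a::finite bit0. P (idx i)} = card {n. n < CARD('a bit0) \<and> P n}"
proof -
  have "idx ` {i::'a bit0. P (idx i)} = {n. n < CARD('a bit0) \<and> P n}"
    apply (auto simp: image_def)
    apply (rule_tac x="of_idx x" in exI)
    by simp
  moreover have "inj_on idx {i::'a bit0. P (idx i)}"
    using idx_inj by (auto simp: inj_on_def)
  ultimately show ?thesis by (metis card_image)
qed

(* Bounded quantifiers over [a..<b] are what evaluation checks; this unpacks them. *)
lemma ball_upt_iff: "(\<forall>k\<in>set [a..<b]. P k) \<longleftrightarrow> (\<forall>k. a \<le> k \<longrightarrow> k < b \<longrightarrow> P k)"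
  by auto

declare add_bit_eq_xor [simp del] mult_bit_eq_and [simp del]

lemma bit_cases: "(b::bit) = 0 \<or> b = 1"
  using bit_not_zero_iff by blast

lemma bit_of_nat_eq0: "(of_nat n :: bit) = 0 \<longleftrightarrow> even n"
  by (metis bit_not_zero_iff even_of_nat_iff odd_one even_zero)

lemma bit_add_eq0: "(a::bit) + b = 0 \<longleftrightarrow> a = b"
  using bit_cases[of a] bit_cases[of b] by auto

lemma z4_cases: "(x::4) = 0 \<or> x = 1 \<or> x = 2 \<or> x = 3"
proof -
  have "\<forall>n<4. (of_nat n :: 4) = 0 \<or> of_nat n = (1::4) \<or> of_nat n = (2::4) \<or> of_nat n = (3::4)"
    by (auto simp: less_Suc_eq numeral_eq_Suc)
  then have "\<forall>x::4. x = 0 \<or> x = 1 \<or> x = 2 \<or> x = 3"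
    unfolding all_bit0 by (simp add: of_idx_eq_of_nat)
  then show ?thesis by blast
qed

lemma card_bit_vectors: "CARD(bit ^ 'n) = 2 ^ CARD('n)"
proof -
  have "bij_betw vec_nth (UNIV :: (bit ^ 'n) set) (UNIV :: ('n \<Rightarrow> bit) set)"
    by (rule bij_betw_byWitness[where f'=vec_lambda]) auto
  then have "CARD(bit ^ 'n) = CARD('n \<Rightarrow> bit)"
    by (rule bij_betw_same_card)
  moreover have "(UNIV :: bit set) = {0, 1}"
    using bit_cases by auto
  then have "CARD(bit) = 2"
    by (metis card_2_iff zero_neq_one)
  ultimately show ?thesis
    by (simp only: card_fun) simp
qed

definition ip :: "bit ^ 'n \<Rightarrow> bit ^ 'n \<Rightarrow> bit" where
  "ip x y = (\<Sum>i\<in>UNIV. x $ i * y $ i)"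

lemma bin_dual_iff: "y \<in> bin_dual N \<longleftrightarrow> (\<forall>x\<in>N. ip x y = 0)"
  by (simp add: bin_dual_def ip_def)

lemma ip_sum_left: "ip (sum g S) y = (\<Sum>l\<in>S. ip (g l) y)"
  by (simp add: ip_def sum_distrib_right sum.swap[of _ UNIV S])

lemma ip_sum_right: "ip x (sum g S) = (\<Sum>l\<in>S. ip x (g l))"
  by (simp add: ip_def sum_distrib_left sum.swap[of _ UNIV S])

lemma ip_card: "ip x y = of_nat (card {i. x $ i \<noteq> 0 \<and> y $ i \<noteq> 0})"
proof -
  have "\<And>i. x $ i * y $ i = of_bool (x $ i \<noteq> 0 \<and> y $ i \<noteq> 0)"
    using bit_cases by auto
  then show ?thesis by (simp add: ip_def)
qed

lemma ip_support: "ip x y = (\<Sum>i\<in>{i. y $ i \<noteq> 0}. x $ i)"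
proof -
  have "\<And>i. x $ i * y $ i = (if y $ i \<noteq> 0 then x $ i else 0)"
    using bit_cases by auto
  then show ?thesis by (simp add: ip_def sum.If_cases)
qed

lemma hweight_add:
  fixes x y :: "bit ^ 'n"
  shows "hweight (x + y) + 2 * card {i. x $ i \<noteq> 0 \<and> y $ i \<noteq> 0} = hweight x + hweight y"
proof -
  let ?A = "{i. x $ i \<noteq> 0}" and ?B = "{i. y $ i \<noteq> 0}"
  have sum_supp: "{i. (x + y) $ i \<noteq> 0} = (?A \<union> ?B) - (?A \<inter> ?B)"
    using bit_cases by auto
  have common: "{i. x $ i \<noteq> 0 \<and> y $ i \<noteq> 0} = ?A \<inter> ?B"
    by blast
  have "card (?A \<union> ?B) + card (?A \<inter> ?B) = card ?A + card ?B"
    using card_Un_Int[of ?A ?B] by simp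
  moreover have "card ((?A \<union> ?B) - (?A \<inter> ?B)) = card (?A \<union> ?B) - card (?A \<inter> ?B)"
    by (rule card_Diff_subset) auto
  moreover have "card (?A \<inter> ?B) \<le> card (?A \<union> ?B)"
    by (rule card_mono) auto
  ultimately show ?thesis
    unfolding hweight_def sum_supp common by linarith
qed

lemma doubly_even_sum:
  fixes g :: "'k \<Rightarrow> bit ^ 'n"
  assumes "finite S" "\<forall>k\<in>S. 4 dvd hweight (g k)" "\<forall>k\<in>S. \<forall>l\<in>S. ip (g k) (g l) = 0"
  shows "4 dvd hweight (sum g S)"
  using assms
proof (induction S rule: finite_induct)
  case empty
  then show ?case by (simp add: hweight_def)
next
  case (insert j S)
  let ?s = "sum g S"
  have "ip (g j) ?s = 0"
    using insert.prems insert.hyps by (simp add: ip_sum_right)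
  then have "even (card {i. g j $ i \<noteq> 0 \<and> ?s $ i \<noteq> 0})"
    by (simp add: ip_card bit_of_nat_eq0)
  then obtain d where d: "card {i. g j $ i \<noteq> 0 \<and> ?s $ i \<noteq> 0} = 2 * d"
    by blast
  have "hweight (g j + ?s) + 4 * d = hweight (g j) + hweight ?s"
    using hweight_add[of "g j" ?s] d by simp
  moreover have "4 dvd hweight (g j)" and "4 dvd hweight ?s"
    using insert by auto
  ultimately have "4 dvd hweight (g j + ?s)"
    by (metis dvd_add dvd_add_left_iff dvd_triv_left)
  then show ?case using insert.hyps by simp
qed

lemma bin_dual_sum: "finite S \<Longrightarrow> (\<forall>j\<in>S. g j \<in> bin_dual N) \<Longrightarrow> sum g S \<in> bin_dual N"
  by (auto simp: bin_dual_iff ip_sum_right intro!: sum.neutral)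

lemma dual_even_weight:
  assumes "(\<chi> i. 1) \<in> N" "y \<in> bin_dual N"
  shows "even (hweight y)"
proof -
  have "ip (\<chi> i. 1) y = 0"
    using assms by (simp add: bin_dual_iff)
  then show ?thesis
    by (simp add: ip_support hweight_def bit_of_nat_eq0)
qed

lemma dual_weight_two:
  assumes "y \<in> bin_dual N" "{i. y $ i \<noteq> 0} = {p, q}" "p \<noteq> q" "x \<in> N"
  shows "x $ p = x $ q"
proof -
  have "ip x y = 0"
    using assms by (simp add: bin_dual_iff)
  then have "x $ p + x $ q = 0"
    using assms(2,3) by (simp add: ip_support)
  then show ?thesis by (simp add: bit_add_eq0)
qed

lemma red2_eq0_iff: "red2 a = 0 \<longleftrightarrow> a = 0 \<or> a = 2"
  by (simp add: red2_def)

lemma red2_eq1_iff: "red2 a = 1 \<longleftrightarrow> a = 1 \<or> a = 3"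
  using z4_cases[of a] by (auto simp: red2_def)

definition lift2 :: "bit ^ 'n \<Rightarrow> 4 ^ 'n" where
  "lift2 u = (\<chi> i. if u $ i = 1 then 2 else 0)"

lemma mult_lift: "x * (if b = (1::bit) then 2 else (0::4)) = (if red2 x * b = 1 then 2 else 0)"
  using z4_cases[of x] bit_cases[of b] by (auto simp: red2_def)

lemma sum_lift:
  "finite A \<Longrightarrow> (\<Sum>i\<in>A. (if f i = (1::bit) then 2 else (0::4))) = (if sum f A = 1 then 2 else 0)"
proof (induction A rule: finite_induct)
  case empty
  then show ?case by simp
next
  case (insert j A)
  then show ?case using bit_cases[of "f j"] bit_cases[of "sum f A"] by auto
qed

(* Twice a vector of the binary dual of the residue code is Z4-orthogonal to the code:
   x \<cdot> 2u = 2 (red2 x \<cdot> u) = 0. *)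
lemma lift_dual:
  assumes "u \<in> bin_dual (residue C)"
  shows "lift2 u \<in> z4_dual C"
  unfolding z4_dual_def
proof (intro CollectI ballI)
  fix x assume "x \<in> C"
  then have "(\<chi> i. red2 (x $ i)) \<in> residue C"
    by (simp add: residue_def)
  then have s: "(\<Sum>i\<in>UNIV. red2 (x $ i) * u $ i) = 0"
    using assms unfolding bin_dual_def by fastforce
  have "(\<Sum>i\<in>UNIV. x $ i * lift2 u $ i)
      = (\<Sum>i\<in>UNIV. (if red2 (x $ i) * u $ i = 1 then 2 else (0::4)))"
    by (simp add: lift2_def mult_lift)
  also have "\<dots> = 0"
    by (simp add: sum_lift s)
  finally show "(\<Sum>i\<in>UNIV. x $ i * lift2 u $ i) = 0" .
qed

(* If v lies in the residue code of a self-dual code C and is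
   supported in T, and the binary dual of the residue code contains, for each j outside
   T, a vector that restricts to the unit vector e_j outside T, then C contains a lift
   of v that vanishes outside T.  (Add 2u_j to a lift of v at every j outside T where
   the lift has entry 2.) *)
lemma self_dual_short_lift:
  fixes C :: "(4 ^ 'n) set"
  assumes sd: "self_dual C" and v: "v \<in> residue C" and supp: "{i. v $ i \<noteq> 0} \<subseteq> T"
    and cover: "\<And>j. j \<notin> T \<Longrightarrow> \<exists>u\<in>bin_dual (residue C). \<forall>i. i \<notin> T \<longrightarrow> u $ i = of_bool (i = j)"
  obtains z where "z \<in> C" "\<And>i. red2 (z $ i) = v $ i" "\<And>i. i \<notin> T \<Longrightarrow> z $ i = 0"
proof -
  obtain c where cC: "c \<in> C" and red_c: "\<And>i. red2 (c $ i) = v $ i"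
    using v unfolding residue_def by auto
  obtain U where U_dual: "\<And>j. j \<notin> T \<Longrightarrow> U j \<in> bin_dual (residue C)"
    and U_unit: "\<And>j i. j \<notin> T \<Longrightarrow> i \<notin> T \<Longrightarrow> U j $ i = of_bool (i = j)"
    using cover by metis
  define J where "J = {j. j \<notin> T \<and> c $ j = 2}"
  define u where "u = sum U J"
  have u_dual: "u \<in> bin_dual (residue C)"
    unfolding u_def by (rule bin_dual_sum) (auto simp: J_def U_dual)
  have u_out: "u $ i = of_bool (i \<in> J)" if "i \<notin> T" for i
  proof -
    have "u $ i = (\<Sum>j\<in>J. of_bool (i = j))"
      unfolding u_def using that by (auto simp: J_def U_unit intro: sum.cong)
    then show ?thesis by simp
  qed
  define z where "z = c + lift2 u"
  have "lift2 u \<in> C"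
    using lift_dual[OF u_dual] sd by (simp add: self_dual_def)
  then have "z \<in> C"
    using sd cC by (simp add: z_def self_dual_def z4_code_def)
  moreover have "red2 (z $ i) = v $ i" for i
    using z4_cases[of "c $ i"] bit_cases[of "u $ i"] red_c[of i]
    by (auto simp: z_def lift2_def red2_def)
  moreover have "z $ i = 0" if "i \<notin> T" for i
  proof -
    have "v $ i = 0"
      using supp that by blast
    then have "c $ i = 0 \<or> c $ i = 2"
      using red_c[of i] by (simp add: red2_eq0_iff)
    then show ?thesis
      using u_out[OF that] that by (auto simp: z_def lift2_def J_def)
  qed
  ultimately show ?thesis using that by blast
qed

(* Euclidean weight of such a lift: odd entries exactly on the support of v, entries 2
   only on the rest of T. *)
lemma eucl_weight_short_lift:
  fixes z :: "4 ^ 'n"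
  assumes red: "\<And>i. red2 (z $ i) = v $ i" and out: "\<And>i. i \<notin> T \<Longrightarrow> z $ i = 0"
  shows "eucl_weight z \<le> hweight v + 4 * card (T - {i. v $ i \<noteq> 0})"
proof -
  have "(z $ i = 1 \<or> z $ i = 3) \<longleftrightarrow> v $ i \<noteq> 0" for i
  proof -
    have "(z $ i = 1 \<or> z $ i = 3) \<longleftrightarrow> red2 (z $ i) = 1"
      by (rule red2_eq1_iff[symmetric])
    then show ?thesis
      using red[of i] bit_cases[of "v $ i"] by auto
  qed
  then have "{i. z $ i = 1} \<union> {i. z $ i = 3} = {i. v $ i \<noteq> 0}"
    by blast
  then have "hweight v = card ({i. z $ i = 1} \<union> {i. z $ i = 3})"
    by (simp add: hweight_def)
  also have "\<dots> = card {i. z $ i = 1} + card {i. z $ i = 3}"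
    by (rule card_Un_disjoint) auto
  finally have "hweight v = card {i. z $ i = 1} + card {i. z $ i = 3}" .
  moreover have "{i. z $ i = 2} \<subseteq> T - {i. v $ i \<noteq> 0}"
  proof
    fix i assume "i \<in> {i. z $ i = 2}"
    then have "z $ i = 2" by simp
    then show "i \<in> T - {i. v $ i \<noteq> 0}"
      using red[of i] out[of i] by (auto simp: red2_def)
  qed
  then have "card {i. z $ i = 2} \<le> card (T - {i. v $ i \<noteq> 0})"
    by (rule card_mono[rotated]) simp
  ultimately show ?thesis
    unfolding eucl_weight_def by linarith
qed

lemma min_eucl_weight_le: "z \<in> C \<Longrightarrow> z \<noteq> 0 \<Longrightarrow> min_eucl_weight C \<le> eucl_weight z"
  unfolding min_eucl_weight_def by (rule Min_le) auto

lemma self_dual_min_eucl_weight_bound: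
  fixes C :: "(4 ^ 'n) set"
  assumes "self_dual C" "v \<in> residue C" "v \<noteq> 0" "{i. v $ i \<noteq> 0} \<subseteq> T"
    and "\<And>j. j \<notin> T \<Longrightarrow> \<exists>u\<in>bin_dual (residue C). \<forall>i. i \<notin> T \<longrightarrow> u $ i = of_bool (i = j)"
  shows "min_eucl_weight C \<le> hweight v + 4 * card (T - {i. v $ i \<noteq> 0})"
proof -
  obtain z where z: "z \<in> C" "\<And>i. red2 (z $ i) = v $ i" "\<And>i. i \<notin> T \<Longrightarrow> z $ i = 0"
    using self_dual_short_lift[OF assms(1,2,4,5)] by blast
  from \<open>v \<noteq> 0\<close> obtain i where "v $ i \<noteq> 0"
    by (auto simp: vec_eq_iff)
  then have "z $ i \<noteq> 0"
    using z(2)[of i] by (auto simp: red2_def)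
  then have "z \<noteq> 0"
    by auto
  moreover have "eucl_weight z \<le> hweight v + 4 * card (T - {i. v $ i \<noteq> 0})"
    using z(2,3) by (rule eucl_weight_short_lift)
  ultimately show ?thesis
    using min_eucl_weight_le[OF z(1)] by linarith
qed

(* Row k < 8 of its generator matrix is gen_rows ! k; the matrix is
   systematic on coordinates 0..7.  Row m - 9 of parity_rows (9 <= m < 40) is a vector of
   the dual of N that is the unit vector e_m on coordinates 9..39. *)

definition gen_rows :: "nat list list" where
  "gen_rows = [[1,0,0,0,0,0,0,0,1,1,1,1,0,0,1,1,0,1,0,0,1,0,1,0,1,0,1,0,1,1,1,0,1,1,0,0,1,0,1,1], [0,1,0,0,0,0,0,0,1,1,0,1,1,0,0,0,0,1,1,0,1,1,1,1,0,0,0,0,1,0,1,0,1,0,0,1,0,0,0,1], [0,0,1,0,0,0,0,0,1,0,1,0,0,0,1,0,0,0,0,1,1,1,0,0,1,1,0,0,0,1,1,0,0,1,1,1,0,0,1,1], [0,0,0,1,0,0,0,0,1,0,0,1,1,0,0,1,1,1,1,1,1,1,0,0,0,0,1,1,1,1,1,0,0,0,0,0,1,1,1,1], [0,0,0,0,1,0,0,0,1,0,0,0,0,1,1,1,1,1,1,1,1,1,0,0,0,0,0,0,0,0,0,1,1,1,1,1,1,1,1,1], [0,0,0,0,0,1,0,0,1,0,0,0,0,0,0,0,0,0,0,0,0,0,1,1,1,1,1,1,1,1,1,1,1,1,1,1,1,1,1,1], [0,0,0,0,0,0,1,0,1,0,0,1,0,1,1,1,0,0,1,1,1,0,1,0,1,0,1,0,0,0,1,0,0,0,1,0,0,1,1,0],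 [0,0,0,0,0,0,0,1,0,1,1,1,1,1,1,1,1,1,1,1,1,1,1,1,1,1,1,1,1,1,1,1,1,1,1,1,1,1,1,1]]"
definition parity_rows :: "nat list list" where
  "parity_rows = [[0,0,1,1,1,1,1,1,1,1,0,0,0,0,0,0,0,0,0,0,0,0,0,0,0,0,0,0,0,0,0,0,0,0,0,0,0,0,0,0], [0,1,0,1,1,1,1,1,1,0,1,0,0,0,0,0,0,0,0,0,0,0,0,0,0,0,0,0,0,0,0,0,0,0,0,0,0,0,0,0], [0,0,1,0,1,1,0,1,1,0,0,1,0,0,0,0,0,0,0,0,0,0,0,0,0,0,0,0,0,0,0,0,0,0,0,0,0,0,0,0], [0,1,0,1,0,0,0,1,0,0,0,0,1,0,0,0,0,0,0,0,0,0,0,0,0,0,0,0,0,0,0,0,0,0,0,0,0,0,0,0], [0,0,0,0,1,0,1,1,0,0,0,0,0,1,0,0,0,0,0,0,0,0,0,0,0,0,0,0,0,0,0,0,0,0,0,0,0,0,0,0], [0,1,0,1,0,1,0,1,1,0,0,0,0,0,1,0,0,0,0,0,0,0,0,0,0,0,0,0,0,0,0,0,0,0,0,0,0,0,0,0], [0,1,1,0,0,1,0,1,1,0,0,0,0,0,0,1,0,0,0,0,0,0,0,0,0,0,0,0,0,0,0,0,0,0,0,0,0,0,0,0], [0,0,0,1,1,0,0,1,0,0,0,0,0,0,0,0,1,0,0,0,0,0,0,0,0,0,0,0,0,0,0,0,0,0,0,0,0,0,0,0], [0,0,1,0,0,1,1,1,1,0,0,0,0,0,0,0,0,1,0,0,0,0,0,0,0,0,0,0,0,0,0,0,0,0,0,0,0,0,0,0],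 [0,1,0,1,1,0,1,1,0,0,0,0,0,0,0,0,0,0,1,0,0,0,0,0,0,0,0,0,0,0,0,0,0,0,0,0,0,0,0,0], [0,0,1,1,1,0,1,1,0,0,0,0,0,0,0,0,0,0,0,1,0,0,0,0,0,0,0,0,0,0,0,0,0,0,0,0,0,0,0,0], [0,0,0,0,0,1,0,1,1,0,0,0,0,0,0,0,0,0,0,0,1,0,0,0,0,0,0,0,0,0,0,0,0,0,0,0,0,0,0,0], [0,1,1,1,1,0,0,1,0,0,0,0,0,0,0,0,0,0,0,0,0,1,0,0,0,0,0,0,0,0,0,0,0,0,0,0,0,0,0,0], [0,0,1,1,1,0,0,1,1,0,0,0,0,0,0,0,0,0,0,0,0,0,1,0,0,0,0,0,0,0,0,0,0,0,0,0,0,0,0,0], [0,1,0,0,0,1,0,1,0,0,0,0,0,0,0,0,0,0,0,0,0,0,0,1,0,0,0,0,0,0,0,0,0,0,0,0,0,0,0,0], [0,1,0,1,1,0,0,1,1,0,0,0,0,0,0,0,0,0,0,0,0,0,0,0,1,0,0,0,0,0,0,0,0,0,0,0,0,0,0,0], [0,0,1,0,0,1,0,1,0,0,0,0,0,0,0,0,0,0,0,0,0,0,0,0,0,1,0,0,0,0,0,0,0,0,0,0,0,0,0,0], [0,1,1,0,1,0,0,1,1,0,0,0,0,0,0,0,0,0,0,0,0,0,0,0,0,0,1,0,0,0,0,0,0,0,0,0,0,0,0,0], [0,0,0,1,0,1,0,1,0,0,0,0,0,0,0,0,0,0,0,0,0,0,0,0,0,0,0,1,0,0,0,0,0,0,0,0,0,0,0,0],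 [0,0,1,0,1,0,1,1,1,0,0,0,0,0,0,0,0,0,0,0,0,0,0,0,0,0,0,0,1,0,0,0,0,0,0,0,0,0,0,0], [0,1,0,0,1,0,1,1,1,0,0,0,0,0,0,0,0,0,0,0,0,0,0,0,0,0,0,0,0,1,0,0,0,0,0,0,0,0,0,0], [0,0,0,0,1,0,0,1,1,0,0,0,0,0,0,0,0,0,0,0,0,0,0,0,0,0,0,0,0,0,1,0,0,0,0,0,0,0,0,0], [0,0,0,0,1,1,0,1,0,0,0,0,0,0,0,0,0,0,0,0,0,0,0,0,0,0,0,0,0,0,0,1,0,0,0,0,0,0,0,0], [0,0,1,1,0,0,1,1,1,0,0,0,0,0,0,0,0,0,0,0,0,0,0,0,0,0,0,0,0,0,0,0,1,0,0,0,0,0,0,0], [0,1,0,1,0,0,1,1,1,0,0,0,0,0,0,0,0,0,0,0,0,0,0,0,0,0,0,0,0,0,0,0,0,1,0,0,0,0,0,0], [0,0,1,0,1,1,1,1,0,0,0,0,0,0,0,0,0,0,0,0,0,0,0,0,0,0,0,0,0,0,0,0,0,0,1,0,0,0,0,0], [0,1,1,0,1,1,0,1,0,0,0,0,0,0,0,0,0,0,0,0,0,0,0,0,0,0,0,0,0,0,0,0,0,0,0,1,0,0,0,0], [0,1,1,0,0,0,1,1,1,0,0,0,0,0,0,0,0,0,0,0,0,0,0,0,0,0,0,0,0,0,0,0,0,0,0,0,1,0,0,0], [0,0,0,1,1,1,1,1,0,0,0,0,0,0,0,0,0,0,0,0,0,0,0,0,0,0,0,0,0,0,0,0,0,0,0,0,0,1,0,0],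 [0,1,0,0,0,0,0,1,1,0,0,0,0,0,0,0,0,0,0,0,0,0,0,0,0,0,0,0,0,0,0,0,0,0,0,0,0,0,1,0], [0,0,0,0,0,0,1,1,1,0,0,0,0,0,0,0,0,0,0,0,0,0,0,0,0,0,0,0,0,0,0,0,0,0,0,0,0,0,0,1]]"

definition gen_entry :: "nat \<Rightarrow> nat \<Rightarrow> bit" where
  "gen_entry k n = of_bool (gen_rows ! k ! n = 1)"

definition parity_entry :: "nat \<Rightarrow> nat \<Rightarrow> bit" where
  "parity_entry m n = of_bool (parity_rows ! (m - 9) ! n = 1)"

lemma gen_rows_orthogonal:
  assumes "k < 8" "l < 8"
  shows "(\<Sum>n\<leftarrow>[0..<40]. gen_entry k n * gen_entry l n) = 0"
proof -
  have "\<forall>k\<in>set [0..<8]. \<forall>l\<in>set [0..<8]. (\<Sum>n\<leftarrow>[0..<40]. gen_entry k n * gen_entry l n) = 0"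
    unfolding gen_entry_def by code_simp
  with assms show ?thesis unfolding ball_upt_iff by blast
qed

lemma gen_rows_weight:
  assumes "k < 8"
  shows "4 dvd length (filter (\<lambda>n. gen_rows ! k ! n = 1) [0..<40])"
proof -
  have "\<forall>k\<in>set [0..<8]. 4 dvd length (filter (\<lambda>n. gen_rows ! k ! n = 1) [0..<40])"
    by code_simp
  with assms show ?thesis unfolding ball_upt_iff by blast
qed

lemma gen_rows_systematic:
  assumes "m < 8" "n < 8"
  shows "gen_entry m n = of_bool (m = n)"
proof -
  have "\<forall>m\<in>set [0..<8]. \<forall>n\<in>set [0..<8]. gen_entry m n = of_bool (m = n)"
    unfolding gen_entry_def by code_simp
  with assms show ?thesis unfolding ball_upt_iff by blast
qed

lemma gen_rows_sum_ones:
  assumes "n < 40"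
  shows "(\<Sum>m\<leftarrow>[0..<8]. gen_entry m n) = 1"
proof -
  have "\<forall>n\<in>set [0..<40]. (\<Sum>m\<leftarrow>[0..<8]. gen_entry m n) = 1"
    unfolding gen_entry_def by code_simp
  with assms show ?thesis unfolding ball_upt_iff by blast
qed

lemma gen_rows_short_word:
  assumes "n < 40"
  shows "(\<Sum>m\<leftarrow>[0..<8]. of_bool (m \<noteq> 7) * gen_entry m n) = of_bool (n \<in> {0,1,2,3,4,5,6,8})"
proof -
  have "\<forall>n\<in>set [0..<40]. (\<Sum>m\<leftarrow>[0..<8]. of_bool (m \<noteq> 7) * gen_entry m n)
          = of_bool (n \<in> set [0,1,2,3,4,5,6,8])"
    unfolding gen_entry_def by code_simp
  with assms have "(\<Sum>m\<leftarrow>[0..<8]. of_bool (m \<noteq> 7) * gen_entry m n)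
          = of_bool (n \<in> set [0,1,2,3,4,5,6,8])"
    unfolding ball_upt_iff by blast
  then show ?thesis by (simp only: list.set)
qed

lemma gen_columns_distinct:
  assumes "n < 40" "m < 40" "\<forall>k<8. gen_entry k n = gen_entry k m"
  shows "n = m"
proof -
  have "\<forall>n\<in>set [0..<40]. \<forall>m\<in>set [0..<40].
          (\<forall>k\<in>set [0..<8]. gen_entry k n = gen_entry k m) \<longrightarrow> n = m"
    unfolding gen_entry_def by code_simp
  with assms show ?thesis unfolding ball_upt_iff by auto
qed

lemma parity_rows_orthogonal:
  assumes "9 \<le> m" "m < 40" "k < 8"
  shows "(\<Sum>n\<leftarrow>[0..<40]. gen_entry k n * parity_entry m n) = 0"
proof -
  have "\<forall>m\<in>set [9..<40]. \<forall>k\<in>set [0..<8]. (\<Sum>n\<leftarrow>[0..<40]. gen_entry k n * parity_entry m n) = 0"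
    unfolding gen_entry_def parity_entry_def by code_simp
  with assms show ?thesis unfolding ball_upt_iff by blast
qed

lemma parity_rows_systematic:
  assumes "9 \<le> m" "m < 40" "9 \<le> n" "n < 40"
  shows "parity_entry m n = of_bool (n = m)"
proof -
  have "\<forall>m\<in>set [9..<40]. \<forall>n\<in>set [9..<40]. parity_entry m n = of_bool (n = m)"
    unfolding parity_entry_def by code_simp
  with assms show ?thesis unfolding ball_upt_iff by blast
qed

lemma idx_lt_40 [simp]: "idx (i::40) < 40"
  using idx_lt[of i] by simp

lemma idx_lt_8 [simp]: "idx (k::8) < 8"
  using idx_lt[of k] by simp

definition gen :: "nat \<Rightarrow> bit ^ 40" where
  "gen k = (\<chi> i. gen_entry k (idx i))"

definition encode :: "bit ^ 8 \<Rightarrow> bit ^ 40" where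
  "encode a = (\<chi> i. \<Sum>k\<in>UNIV. a $ k * gen_entry (idx k) (idx i))"

definition code_N :: "(bit ^ 40) set" where
  "code_N = range encode"

lemma encode_add: "encode (a + b) = encode a + encode b"
  by (simp add: encode_def vec_eq_iff distrib_right sum.distrib)

lemma encode_zero: "encode 0 = 0"
  by (simp add: encode_def vec_eq_iff)

lemma encode_scale: "(\<chi> i. c * encode a $ i) = encode (\<chi> k. c * a $ k)"
  by (simp add: encode_def vec_eq_iff sum_distrib_left mult.assoc)

lemma code_N_linear: "bin_linear_code code_N"
  unfolding bin_linear_code_def code_N_def
  by (auto simp: encode_scale) (metis encode_zero rangeI, metis encode_add rangeI)

(* The encoding is systematic, hence injective, so N has 2^8 codewords. *)
lemma encode_systematic: "n < 8 \<Longrightarrow> encode a $ (of_idx n :: 40) = a $ (of_idx n :: 8)"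
proof -
  assume n: "n < 8"
  have "encode a $ (of_idx n :: 40) = (\<Sum>m<8. a $ (of_idx m :: 8) * gen_entry m n)"
    using n by (simp add: encode_def sum_bit0)
  also have "\<dots> = (\<Sum>m<8. a $ (of_idx m :: 8) * of_bool (m = n))"
    using gen_rows_systematic n by (intro sum.cong) auto
  also have "\<dots> = a $ (of_idx n :: 8)"
    using n by simp
  finally show ?thesis .
qed

lemma encode_inj: "inj encode"
proof (rule injI)
  fix a b assume "encode a = encode b"
  then have "\<forall>n<8. a $ (of_idx n :: 8) = b $ (of_idx n)"
    by (metis encode_systematic)
  then have "\<forall>k::8. a $ k = b $ k"
    unfolding all_bit0 by simp
  then show "a = b"
    by (simp add: vec_eq_iff)
qed

lemma code_N_card: "card code_N = 2 ^ 8"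
  unfolding code_N_def using card_image[OF encode_inj] card_bit_vectors[where 'n=8] by simp

lemma encode_as_sum: "encode a = sum (\<lambda>k. gen (idx k)) {k. a $ k \<noteq> 0}"
proof -
  have "(\<Sum>k\<in>UNIV. a $ k * gen_entry (idx k) (idx i)) = (\<Sum>k\<in>{k. a $ k \<noteq> 0}. gen_entry (idx k) (idx i))"
    for i :: 40
  proof -
    have "\<And>k. a $ k * gen_entry (idx k) (idx i) = (if a $ k \<noteq> 0 then gen_entry (idx k) (idx i) else 0)"
      using bit_cases by auto
    then show ?thesis by (simp add: sum.If_cases)
  qed
  then show ?thesis by (simp add: encode_def gen_def vec_eq_iff)
qed

lemma gen_in_code_N: "k < 8 \<Longrightarrow> gen k \<in> code_N"
proof -
  assume k: "k < 8"
  have "{m::8. (if idx m = k then 1 else 0) \<noteq> (0::bit)} = {of_idx k}"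
    using k by auto
  then have "encode (\<chi> m. if idx m = k then 1 else 0) = gen k"
    using k unfolding encode_as_sum by simp
  then show ?thesis unfolding code_N_def by (metis rangeI)
qed

lemma ones_in_code_N: "(\<chi> i. 1) \<in> code_N"
proof -
  have "(\<Sum>k\<in>(UNIV::8 set). gen_entry (idx k) n) = 1" if "n < 40" for n
    using gen_rows_sum_ones[OF that] by (simp add: sum_bit0 sum_lessThan_list)
  then have "encode (\<chi> k. 1) = (\<chi> i. 1)"
    by (simp add: encode_def vec_eq_iff)
  then show ?thesis unfolding code_N_def by (metis rangeI)
qed

lemma gen_weight: "k < 8 \<Longrightarrow> 4 dvd hweight (gen k)"
proof -
  assume k: "k < 8"
  have "hweight (gen k) = card {n. n < 40 \<and> gen_entry k n \<noteq> 0}"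
    using card_bit0_pred[where P="\<lambda>n. gen_entry k n \<noteq> 0" and 'a=20]
    by (simp add: gen_def hweight_def)
  also have "\<dots> = length (filter (\<lambda>n. gen_rows ! k ! n = 1) [0..<40])"
    by (simp add: card_filter_upt gen_entry_def)
  finally show ?thesis using gen_rows_weight k by simp
qed

lemma gen_orthogonal: "k < 8 \<Longrightarrow> l < 8 \<Longrightarrow> ip (gen k) (gen l) = 0"
  by (simp add: ip_def gen_def sum_bit0 sum_lessThan_list gen_rows_orthogonal)

lemma code_N_doubly_even: "doubly_even code_N"
  unfolding doubly_even_def code_N_def encode_as_sum
  by (auto intro!: doubly_even_sum simp: gen_weight gen_orthogonal)

lemma dual_code_N_if_gen_orthogonal:
  assumes "\<And>k. k < 8 \<Longrightarrow> ip (gen k) y = 0"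
  shows "y \<in> bin_dual code_N"
  unfolding bin_dual_iff code_N_def encode_as_sum
  using assms by (auto simp: ip_sum_left intro!: sum.neutral)

(* The dual has no words of weight 2 since the columns of the generator matrix are
   distinct, and no words of odd weight since it is orthogonal to the all-ones word. *)
lemma code_N_dual_min_weight: "min_weight_ge (bin_dual code_N) 4"
  unfolding min_weight_ge_def
proof (intro ballI impI)
  fix y assume y_dual: "y \<in> bin_dual code_N" and "y \<noteq> 0"
  then have "hweight y \<noteq> 0"
    by (auto simp: hweight_def vec_eq_iff)
  moreover have "even (hweight y)"
    using dual_even_weight[OF ones_in_code_N y_dual] .
  moreover have "hweight y \<noteq> 2"
  proof
    assume "hweight y = 2"
    then obtain p q where pq: "{i. y $ i \<noteq> 0} = {p, q}" "p \<noteq> q"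
      by (auto simp: hweight_def card_2_iff)
    have "\<forall>k<8. gen_entry k (idx p) = gen_entry k (idx q)"
      using dual_weight_two[OF y_dual pq gen_in_code_N] by (simp add: gen_def)
    then have "idx p = idx q"
      using gen_columns_distinct[of "idx p" "idx q"] by simp
    then show False using pq(2) by simp
  qed
  ultimately show "4 \<le> hweight y"
    by presburger
qed

definition parity_vec :: "nat \<Rightarrow> bit ^ 40" where
  "parity_vec m = (\<chi> i. parity_entry m (idx i))"

lemma parity_vec_dual: "9 \<le> m \<Longrightarrow> m < 40 \<Longrightarrow> parity_vec m \<in> bin_dual code_N"
  by (rule dual_code_N_if_gen_orthogonal)
    (simp add: ip_def gen_def parity_vec_def sum_bit0 sum_lessThan_list parity_rows_orthogonal)

lemma parity_vec_unit:
  "9 \<le> m \<Longrightarrow> m < 40 \<Longrightarrow> 9 \<le> idx i \<Longrightarrow> parity_vec m $ (i::40) = of_bool (idx i = m)"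
  by (simp add: parity_vec_def parity_rows_systematic)

definition short_word :: "bit ^ 40" where
  "short_word = encode (\<chi> k. of_bool (idx k \<noteq> 7))"

lemma short_word_in_code_N: "short_word \<in> code_N"
  by (simp add: short_word_def code_N_def)

lemma short_word_nth: "short_word $ i = of_bool (idx i \<in> {0,1,2,3,4,5,6,8})"
proof -
  have "short_word $ i = (\<Sum>m<8. of_bool (m \<noteq> 7) * gen_entry m (idx i))"
    by (simp add: short_word_def encode_def sum_bit0 del: sum_of_bool_mult_eq)
  also have "\<dots> = of_bool (idx i \<in> {0,1,2,3,4,5,6,8})"
    using gen_rows_short_word[of "idx i"] by (simp add: sum_lessThan_list)
  finally show ?thesis .
qed

(* Any self-dual code with residue N contains a nonzero word of Euclidean weight at most 12:
   apply the general bound with v the short word and T the coordinates 0..8. *)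
lemma code_N_lift_min_eucl_weight:
  fixes C :: "(4 ^ 40) set"
  assumes "self_dual C" "residue C = code_N"
  shows "min_eucl_weight C \<le> 12"
proof -
  let ?T = "{i::40. idx i < 9}"
  have supp: "{i. short_word $ i \<noteq> 0} = {i::40. idx i \<in> {0,1,2,3,4,5,6,8}}"
    by (simp add: short_word_nth)
  have "hweight short_word = card {n. n < 40 \<and> n \<in> {0,1,2,3,4,5,6,8::nat}}"
    unfolding hweight_def supp
    using card_bit0_pred[where P="\<lambda>n. n \<in> {0,1,2,3,4,5,6,8}" and 'a=20] by simp
  also have "{n. n < 40 \<and> n \<in> {0,1,2,3,4,5,6,8::nat}} = {0,1,2,3,4,5,6,8}"
    by auto
  finally have weight: "hweight short_word = 8"
    by simp
  have "?T - {i. short_word $ i \<noteq> 0} = {i::40. idx i = 7}"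
    unfolding supp by auto
  moreover have "card {i::40. idx i = 7} = card {n. n < 40 \<and> n = (7::nat)}"
    using card_bit0_pred[where P="\<lambda>n. n = 7" and 'a=20] by simp
  moreover have "{n. n < 40 \<and> n = (7::nat)} = {7}"
    by auto
  ultimately have rest: "card (?T - {i. short_word $ i \<noteq> 0}) = 1"
    by simp
  have "min_eucl_weight C \<le> hweight short_word + 4 * card (?T - {i. short_word $ i \<noteq> 0})"
  proof (rule self_dual_min_eucl_weight_bound[OF assms(1)])
    show "short_word \<in> residue C"
      using short_word_in_code_N assms(2) by simp
    show "short_word \<noteq> 0"
      using short_word_nth[of "of_idx 0"] by (auto simp: vec_eq_iff)
    show "{i. short_word $ i \<noteq> 0} \<subseteq> ?T"
      unfolding supp by auto
    show "\<exists>u\<in>bin_dual (residue C). \<forall>i. i \<notin> ?T \<longrightarrow> u $ i = of_bool (i = j)"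
      if "j \<notin> ?T" for j
      using that parity_vec_dual[of "idx j"] parity_vec_unit[of "idx j"] assms(2)
      by (intro bexI[of _ "parity_vec (idx j)"]) auto
  qed
  then show ?thesis
    using weight rest by simp
qed

theorem mainTheorem13:
  "\<exists>N :: (bit ^ 40) set.
     bin_code_nk N 8 \<and> doubly_even N \<and> (\<chi> i. 1) \<in> N \<and> min_weight_ge (bin_dual N) 4 \<and>
     (\<forall>C :: (4 ^ 40) set. type_II C \<and> residue C = N \<longrightarrow> \<not> extremal_type_II C)"
proof (intro exI[of _ code_N] conjI allI impI)
  show "bin_code_nk code_N 8"
    using code_N_linear code_N_card by (simp add: bin_code_nk_def)
  show "doubly_even code_N" "(\<chi> i. 1) \<in> code_N" "min_weight_ge (bin_dual code_N) 4"
    by (fact code_N_doubly_even, fact ones_in_code_N, fact code_N_dual_min_weight)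
next
  fix C :: "(4 ^ 40) set"
  assume "type_II C \<and> residue C = code_N"
  then have "min_eucl_weight C \<le> 12"
    by (intro code_N_lift_min_eucl_weight) (auto simp: type_II_def)
  then show "\<not> extremal_type_II C"
    by (simp add: extremal_type_II_def)
qed

end
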